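(* Let $X$ be an $n$-dimensional real Banach space and let $A \subset X$ be a bounded set not containing the zero vector, such that for every non-zero $x \in X$ there exists $r_x > 0$ with $r_x x \in A$. Then: (i) every ball-covering of $A$ contains at least $n+1$ balls; (ii) if, in addition, $X$ is smooth and $d(0, A) > 0$, then $A$ admits a ball-covering consisting of $n+1$ balls.
   Context: A ball-covering of a set $A \subset X$ is a collection of open balls $B(c, r) = \{ z : \|c - z\| < r\}$, none containing the zero vector (i.e. $0 < r \le \|c\|$), whose union contains $A$. $X$ is smooth if every non-zero $x \in X$ has a unique $f \in S_{X^*}$ with $f(x) = \|x\|$. $d(0,A) = \inf\{\|a\|: a \in A\}$. *)

theory Defs
  imports "HOL-Analysis.Analysis"
begin

definition ball_covering :: "'a::real_normed_vector set set \<Rightarrow> 'a set \<Rightarrow> bool" where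
  "ball_covering \<B> A \<longleftrightarrow>
     (\<forall>B\<in>\<B>. \<exists>c r. B = ball c r \<and> 0 < r \<and> r \<le> norm c) \<and> A \<subseteq> \<Union>\<B>"

definition smooth_space :: "'a::real_normed_vector itself \<Rightarrow> bool" where
  "smooth_space _ \<longleftrightarrow>
     (\<forall>x::'a. x \<noteq> 0 \<longrightarrow> (\<exists>!f :: 'a \<Rightarrow>\<^sub>L real. norm f = 1 \<and> blinfun_apply f x = norm x))"

definition dist0 :: "'a::real_normed_vector set \<Rightarrow> real" where
  "dist0 A = (INF a\<in>A. norm a)"

end

(*
  (i) A ball B(c, r) with r <= norm c lies in the open half-space {f > 0} of a norming
  functional f of c.  Of at most n such functionals, all but one have a common non-zero zero x,
  and after replacing x by -x if necessary all of them are <= 0 at x.  The ray through x then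
  misses every ball, although it meets A.

  (ii) Norming functionals separating the points of X, together with minus their sum, give
  n + 1 functionals whose open half-spaces {g > 0} cover X - {0}.  If c is a norming point of
  such a g, smoothness puts every z with g z > 0 into some ball B(t c, t): otherwise the
  Hahn-Banach theorem, applied to the distance from the ray through z, would produce a second
  norm-one functional attaining its norm at c.  The balls B(t c, t) increase with t, so by
  compactness of the closure of A, which avoids 0, a single radius t serves all n + 1 half-spaces.
*)
theory Submission
  imports Defs
begin

section \<open>Sublinear functionals and the Hahn--Banach extension\<close>

definition sublinear :: "('a::real_vector \<Rightarrow> real) \<Rightarrow> bool" where
  "sublinear p \<longleftrightarrow>
    (\<forall>x y. p (x + y) \<le> p x + p y) \<and> (\<forall>r x. 0 \<le> r \<longrightarrow> p (r *\<^sub>R x) = r * p x)"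

lemma sublinear_norm: "sublinear norm"
  by (simp add: sublinear_def norm_triangle_ineq)

lemma le_infdist:
  assumes "A \<noteq> {}" "\<And>a. a \<in> A \<Longrightarrow> m \<le> dist y a"
  shows "m \<le> infdist y A"
  unfolding infdist_notempty[OF assms(1)] using assms by (intro cINF_greatest) auto

lemma sublinear_infdist_convex_cone:
  fixes C :: "'a::real_normed_vector set"
  assumes "convex_cone C"
  shows "sublinear (\<lambda>y. infdist y C)"
proof -
  have C: "C \<noteq> {}" "0 \<in> C" "\<And>a b. a \<in> C \<Longrightarrow> b \<in> C \<Longrightarrow> a + b \<in> C"
      "\<And>r a. 0 \<le> r \<Longrightarrow> a \<in> C \<Longrightarrow> r *\<^sub>R a \<in> C"
    using assms by (auto simp: convex_cone_iff)
  have add: "infdist (y + z) C \<le> infdist y C + infdist z C" for y z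
  proof -
    have "infdist (y + z) C - dist z b \<le> infdist y C" if b: "b \<in> C" for b
    proof (rule le_infdist[OF C(1)])
      fix a assume a: "a \<in> C"
      have "infdist (y + z) C \<le> dist (y + z) (a + b)" using C(3)[OF a b] by (rule infdist_le)
      also have "\<dots> \<le> dist y a + dist z b" by (simp add: dist_norm add_diff_add norm_triangle_ineq)
      finally show "infdist (y + z) C - dist z b \<le> dist y a" by simp
    qed
    then have "infdist (y + z) C - infdist y C \<le> infdist z C"
      by (intro le_infdist[OF C(1)]) force
    then show ?thesis by simp
  qed
  have scale_le: "infdist (r *\<^sub>R y) C \<le> r * infdist y C" if "r > 0" for r y
  proof -
    have "infdist (r *\<^sub>R y) C / r \<le> infdist y C"
    proof (rule le_infdist[OF C(1)])
      fix a assume "a \<in> C"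
      then have "infdist (r *\<^sub>R y) C \<le> dist (r *\<^sub>R y) (r *\<^sub>R a)"
        using C(4) that by (intro infdist_le) auto
      also have "\<dots> = r * dist y a"
        using that by (simp add: dist_norm flip: scaleR_diff_right)
      finally show "infdist (r *\<^sub>R y) C / r \<le> dist y a"
        using that by (simp add: divide_le_eq mult.commute)
    qed
    then show ?thesis using that by (simp add: divide_le_eq mult.commute)
  qed
  have "infdist (r *\<^sub>R y) C = r * infdist y C" if "r \<ge> 0" for r y
  proof (cases "r = 0")
    case True
    then show ?thesis using C(2) by simp
  next
    case False
    with that have r: "r > 0" by simp
    have "r * infdist y C = r * infdist (inverse r *\<^sub>R (r *\<^sub>R y)) C" using r by simp
    also have "\<dots> \<le> infdist (r *\<^sub>R y) C"
      using scale_le[of "inverse r" "r *\<^sub>R y"] r by (simp add: field_simps)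
    finally show ?thesis using scale_le[OF r, of y] by simp
  qed
  with add show ?thesis by (simp add: sublinear_def)
qed

lemma exists_linear_vanishing_on_subspace:
  fixes b :: "'a::real_vector"
  assumes S: "subspace S" and b: "b \<notin> S"
  shows "\<exists>\<tau>::'a \<Rightarrow> real. linear \<tau> \<and> \<tau> b = 1 \<and> (\<forall>x\<in>S. \<tau> x = 0)"
proof -
  obtain BS where BS: "BS \<subseteq> S" "independent BS" "S \<subseteq> span BS" "card BS = dim S"
    by (rule basis_exists)
  have "span BS = S" using BS S by (intro span_subspace)
  then have indep: "independent (insert b BS)" using BS(2) b by (simp add: independent_insertI)
  obtain \<tau> :: "'a \<Rightarrow> real"
    where \<tau>: "linear \<tau>" "\<forall>x\<in>insert b BS. \<tau> x = (if x = b then 1 else 0)"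
    using linear_independent_extend[OF indep, of "\<lambda>x. if x = b then 1 else 0"] by blast
  have "\<forall>x\<in>BS. \<tau> x = 0" using \<tau>(2) BS(1) b by auto
  then have "\<tau> x = 0" if "x \<in> S" for x
    using linear_eq_0_on_span[OF \<tau>(1)] that \<open>span BS = S\<close> by blast
  with \<tau> show ?thesis by auto
qed

lemma hahn_banach_step:
  fixes p :: "'a::real_vector \<Rightarrow> real"
  assumes p: "sublinear p" and S: "subspace S" and f: "linear f" and le: "\<forall>x\<in>S. f x \<le> p x"
  shows "\<exists>g. linear g \<and> (\<forall>x\<in>span (insert b S). g x \<le> p x) \<and> (\<forall>x\<in>S. g x = f x)"
proof (cases "b \<in> S")
  case True
  then have "span (insert b S) = S"
    using S by (metis span_eq_iff span_redundant span_base)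
  with f le show ?thesis by auto
next
  case False
  have sub: "p (x + y) \<le> p x + p y" and hom: "r \<ge> 0 \<Longrightarrow> p (r *\<^sub>R x) = r * p x" for x y r
    using p by (auto simp: sublinear_def)
  have bnd: "f m1 - p (m1 - b) \<le> p (m2 + b) - f m2" if "m1 \<in> S" "m2 \<in> S" for m1 m2
  proof -
    have "f m1 + f m2 \<le> p (m1 + m2)"
      using le that S by (simp add: linear_add[OF f, symmetric] subspace_add)
    also have "\<dots> \<le> p (m1 - b) + p (m2 + b)"
      using sub[of "m1 - b" "m2 + b"] by simp
    finally show ?thesis by simp
  qed
  define a where "a = Sup ((\<lambda>m. f m - p (m - b)) ` S)"
  have "0 \<in> S" using S by (rule subspace_0)
  then have bdd: "bdd_above ((\<lambda>m. f m - p (m - b)) ` S)"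
    using bnd[OF _ \<open>0 \<in> S\<close>] by (intro bdd_aboveI2[where M = "p b - f 0"]) simp
  have a_ge: "f m - p (m - b) \<le> a" if "m \<in> S" for m
    unfolding a_def using that bdd by (auto intro: cSup_upper)
  have a_le: "a \<le> p (m + b) - f m" if "m \<in> S" for m
    unfolding a_def using that bnd \<open>0 \<in> S\<close> by (auto intro: cSup_least)
  obtain \<tau> :: "'a \<Rightarrow> real" where \<tau>: "linear \<tau>" "\<tau> b = 1" "\<forall>x\<in>S. \<tau> x = 0"
    using exists_linear_vanishing_on_subspace[OF S False] by blast
  define g where "g x = f x + (a - f b) * \<tau> x" for x
  have "linear g"
    unfolding g_def[abs_def] using f \<tau>(1)
    by (intro linearI) (simp_all add: linear_add linear_scale algebra_simps)
  moreover have "g x \<le> p x" if x: "x \<in> span (insert b S)" for x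
  proof -
    obtain t where m: "x - t *\<^sub>R b \<in> S"
      using x span_eq_iff[THEN iffD2, OF S] by (auto simp: span_breakdown_eq)
    define m where "m = x - t *\<^sub>R b"
    have x_eq: "x = m + t *\<^sub>R b" and mS: "m \<in> S" using m by (simp_all add: m_def)
    have "g x = f m + t * a"
      using \<tau> mS by (simp add: g_def x_eq linear_add[OF f] linear_scale[OF f]
          linear_add[OF \<tau>(1)] linear_scale[OF \<tau>(1)] algebra_simps)
    also have "\<dots> \<le> p x"
    proof (cases t "0::real" rule: linorder_cases)
      case less
      define m' where "m' = inverse (- t) *\<^sub>R m"
      have "m' \<in> S" unfolding m'_def by (rule subspace_scale[OF S mS])
      have m_eq: "m = (- t) *\<^sub>R m'" and x_eq': "x = (- t) *\<^sub>R (m' - b)"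
        using less by (simp_all add: m'_def x_eq algebra_simps)
      have "- t * (f m' - p (m' - b)) \<le> - t * a"
        using a_ge[OF \<open>m' \<in> S\<close>] less by (intro mult_left_mono) auto
      then show ?thesis
        using less hom[of "- t" "m' - b"]
        by (simp add: m_eq x_eq' linear_neg[OF f] linear_scale[OF f] algebra_simps)
    next
      case equal
      then show ?thesis using le mS x_eq by simp
    next
      case greater
      define m' where "m' = inverse t *\<^sub>R m"
      have "m' \<in> S" unfolding m'_def by (rule subspace_scale[OF S mS])
      have m_eq: "m = t *\<^sub>R m'" and x_eq': "x = t *\<^sub>R (m' + b)"
        using greater by (simp_all add: m'_def x_eq algebra_simps)
      have "t * a \<le> t * (p (m' + b) - f m')"
        using a_le[OF \<open>m' \<in> S\<close>] greater by (intro mult_left_mono) auto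
      then show ?thesis
        using greater hom[of t "m' + b"]
        by (simp add: m_eq x_eq' linear_scale[OF f] algebra_simps)
    qed
    finally show ?thesis .
  qed
  moreover have "g x = f x" if "x \<in> S" for x
    using \<tau>(3) that by (simp add: g_def)
  ultimately show ?thesis by blast
qed

lemma hahn_banach_finite:
  fixes p :: "'a::real_vector \<Rightarrow> real"
  assumes T: "finite T" and p: "sublinear p"
    and S: "subspace S" and f: "linear f" and le: "\<forall>x\<in>S. f x \<le> p x"
  shows "\<exists>g. linear g \<and> (\<forall>x\<in>span (S \<union> T). g x \<le> p x) \<and> (\<forall>x\<in>S. g x = f x)"
  using T
proof (induction T)
  case empty
  show ?case using S f le by (intro exI[of _ f]) (simp add: span_eq_iff[THEN iffD2])
next
  case (insert b T)
  obtain g where g: "linear g" "\<forall>x\<in>span (S \<union> T). g x \<le> p x" "\<forall>x\<in>S. g x = f x"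
    using insert.IH by blast
  obtain h where h: "linear h" "\<forall>x\<in>span (insert b (span (S \<union> T))). h x \<le> p x"
      "\<forall>x\<in>span (S \<union> T). h x = g x"
    using hahn_banach_step[OF p subspace_span g(1,2)] by blast
  have "span (insert b (span (S \<union> T))) = span (S \<union> insert b T)"
    by (simp add: span_insert span_span)
  with g h show ?case by (auto simp: span_base)
qed

section \<open>Compactness in finite dimensions\<close>

lemma closed_if_compact_Int_cball:
  fixes V :: "'a::real_normed_vector set"
  assumes "\<And>r. compact (V \<inter> cball 0 r)"
  shows "closed V"
proof -
  have "l \<in> V" if "l \<in> closure V" for l
  proof -
    have "l \<in> ball l 1 \<inter> closure V" using that by simp
    also have "\<dots> \<subseteq> closure (ball l 1 \<inter> V)" by (rule open_Int_closure_subset) simp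
    also have "\<dots> \<subseteq> closure (V \<inter> cball 0 (norm l + 1))"
    proof (intro closure_mono subsetI)
      fix x assume "x \<in> ball l 1 \<inter> V"
      then show "x \<in> V \<inter> cball 0 (norm l + 1)"
        using norm_triangle_ineq4[of l "l - x"] by (simp add: dist_norm)
    qed
    also have "\<dots> = V \<inter> cball 0 (norm l + 1)"
      using assms by (simp add: compact_imp_closed)
    finally show ?thesis by blast
  qed
  then show ?thesis by (auto simp flip: closure_subset_eq)
qed

lemma abs_mult_infdist_le_norm:
  fixes b :: "'a::real_normed_vector"
  assumes V: "subspace V" and m: "m \<in> V"
  shows "\<bar>t\<bar> * infdist b V \<le> norm (m + t *\<^sub>R b)"
proof (cases "t = 0")
  case False
  have "- inverse t *\<^sub>R m \<in> V" using V m by (simp add: subspace_neg subspace_scale)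
  then have "infdist b V \<le> norm (b + inverse t *\<^sub>R m)"
    by (metis dist_norm infdist_le diff_minus_eq_add scaleR_minus_left)
  then have "\<bar>t\<bar> * infdist b V \<le> norm (t *\<^sub>R (b + inverse t *\<^sub>R m))"
    by (simp add: mult_left_mono)
  also have "t *\<^sub>R (b + inverse t *\<^sub>R m) = m + t *\<^sub>R b"
    using False by (simp add: algebra_simps)
  finally show ?thesis .
qed simp

lemma compact_span_insert_Int_cball:
  fixes V :: "'a::real_normed_vector set"
  assumes V: "subspace V" "\<And>r. compact (V \<inter> cball 0 r)" and b: "b \<notin> V"
  shows "compact (span (insert b V) \<inter> cball 0 r)"
proof -
  define \<delta> where "\<delta> = infdist b V"
  have "0 < \<delta>"
    unfolding \<delta>_def using V b subspace_0
    by (intro infdist_pos_not_in_closed closed_if_compact_Int_cball) auto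
  \<comment> \<open>For \<open>w = m + t *\<^sub>R b\<close> in the slice, \<open>\<bar>t\<bar> * \<delta> \<le> norm w\<close> bounds both \<open>t\<close> and \<open>m\<close>.\<close>
  define I where
    "I = (\<lambda>(m, t). m + t *\<^sub>R b) ` ((V \<inter> cball 0 (r + r / \<delta> * norm b)) \<times> cball 0 (r / \<delta>))"
  have "compact I"
    unfolding I_def by (intro compact_continuous_image compact_Times V(2) compact_cball)
      (auto intro!: continuous_intros simp: case_prod_unfold)
  have "span (insert b V) \<inter> cball 0 r \<subseteq> I"
  proof
    fix w assume w: "w \<in> span (insert b V) \<inter> cball 0 r"
    then obtain t where m: "w - t *\<^sub>R b \<in> V"
      using span_eq_iff[THEN iffD2, OF V(1)] by (auto simp: span_breakdown_eq)
    have "\<bar>t\<bar> * \<delta> \<le> r"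
      using abs_mult_infdist_le_norm[OF V(1) m, of t b] w by (simp add: \<delta>_def)
    then have t: "\<bar>t\<bar> \<le> r / \<delta>" using \<open>0 < \<delta>\<close> by (simp add: le_divide_eq)
    have "norm (w - t *\<^sub>R b) \<le> norm w + \<bar>t\<bar> * norm b"
      using norm_triangle_ineq4[of w "t *\<^sub>R b"] by simp
    also have "\<dots> \<le> r + r / \<delta> * norm b"
      using w t by (intro add_mono mult_right_mono) auto
    finally show "w \<in> I"
      unfolding I_def using m t by (intro image_eqI[of _ _ "(w - t *\<^sub>R b, t)"]) auto
  qed
  moreover have "I \<subseteq> span (insert b V)"
  proof
    fix x assume "x \<in> I"
    then obtain m t where "m \<in> V" "x = m + t *\<^sub>R b" by (auto simp: I_def)
    then show "x \<in> span (insert b V)"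
      unfolding span_breakdown_eq by (intro exI[of _ t]) (simp add: span_base)
  qed
  ultimately have "span (insert b V) \<inter> cball 0 r = I \<inter> cball 0 r" by blast
  with \<open>compact I\<close> show ?thesis by (simp add: compact_Int_closed)
qed

lemma compact_span_Int_cball:
  fixes T :: "'a::real_normed_vector set"
  assumes "finite T"
  shows "compact (span T \<inter> cball 0 r)"
  using assms
proof (induction T arbitrary: r)
  case empty
  then show ?case using compact_Int_closed[of "{0}" "cball 0 r"] by simp
next
  case (insert b T)
  show ?case
  proof (cases "b \<in> span T")
    case True
    then show ?thesis using insert.IH by (simp add: span_redundant)
  next
    case False
    then have "compact (span (insert b (span T)) \<inter> cball 0 r)"
      using insert.IH by (intro compact_span_insert_Int_cball subspace_span)
    then show ?thesis by (simp add: span_insert span_span)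
  qed
qed

section \<open>Finite-dimensional normed spaces\<close>

lemma abs_le_norm_if_le_norm:
  fixes f :: "'a::real_normed_vector \<Rightarrow> real"
  assumes "linear f" "\<And>x. f x \<le> norm x"
  shows "\<bar>f x\<bar> \<le> norm x"
  using assms(2)[of x] assms(2)[of "- x"] by (simp add: linear_neg[OF assms(1)])

lemma bounded_linear_if_le_norm:
  fixes f :: "'a::real_normed_vector \<Rightarrow> real"
  assumes "linear f" "\<And>x. f x \<le> norm x"
  shows "bounded_linear f"
  using assms abs_le_norm_if_le_norm[OF assms]
  by (intro bounded_linear_intro[where K = 1]) (auto simp: linear_add linear_scale)

lemma norm_Blinfun_eq_1:
  fixes f :: "'a::real_normed_vector \<Rightarrow> real"
  assumes f: "linear f" "\<And>x. f x \<le> norm x" and c: "norm c = 1" "f c = 1"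
  shows "norm (Blinfun f) = 1" and "blinfun_apply (Blinfun f) = f"
proof -
  show app: "blinfun_apply (Blinfun f) = f"
    using bounded_linear_if_le_norm[OF f] by (rule bounded_linear_Blinfun_apply)
  have "norm (Blinfun f) \<le> 1"
    using abs_le_norm_if_le_norm[OF f] app by (intro norm_blinfun_bound) auto
  moreover have "1 \<le> norm (Blinfun f)"
    using norm_blinfun[of "Blinfun f" c] app c by simp
  ultimately show "norm (Blinfun f) = 1" by simp
qed

locale finite_dimensional_normed_space =
  fixes B :: "'a::real_normed_vector set"
  assumes finite_B: "finite B" and independent_B: "independent B" and span_B: "span B = UNIV"
begin

sublocale fd: finite_dimensional_vector_space "scaleR :: real \<Rightarrow> 'a \<Rightarrow> 'a" B
  rewrites "module.dependent (*\<^sub>R) = dependent"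
    and "module.subspace (*\<^sub>R) = subspace"
    and "module.span (*\<^sub>R) = span"
    and "vector_space.dim (*\<^sub>R) = dim"
  by unfold_locales (use finite_B independent_B span_B in
      \<open>auto simp: dependent_raw_def subspace_raw_def span_raw_def dim_raw_def\<close>)

lemma compact_if_bounded_closed:
  fixes K :: "'a set"
  assumes "bounded K" "closed K"
  shows "compact K"
proof -
  obtain r where "K \<subseteq> cball 0 r"
    using assms(1) by (auto simp: bounded_iff subset_eq)
  then have "K = (span B \<inter> cball 0 r) \<inter> K" using span_B by blast
  then show ?thesis
    using compact_span_Int_cball[OF finite_B] assms(2) by (metis compact_Int_closed)
qed

lemma hahn_banach:
  fixes p :: "'a \<Rightarrow> real"
  assumes "sublinear p" "subspace S" "linear f" "\<forall>x\<in>S. f x \<le> p x"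
  shows "\<exists>g. linear g \<and> (\<forall>x. g x \<le> p x) \<and> (\<forall>x\<in>S. g x = f x)"
proof -
  have "span (S \<union> B) = UNIV"
    using span_B span_mono[of B "S \<union> B"] by blast
  then show ?thesis using hahn_banach_finite[OF finite_B assms] by auto
qed

lemma exists_dominated_linear_functional:
  fixes p :: "'a \<Rightarrow> real"
  assumes p: "sublinear p" and c: "c \<noteq> 0" and "\<alpha> \<le> p c" "- \<alpha> \<le> p (- c)"
  shows "\<exists>g. linear g \<and> (\<forall>x. g x \<le> p x) \<and> g c = \<alpha>"
proof -
  obtain f :: "'a \<Rightarrow> real" where f: "linear f" "f c = \<alpha>"
    using linear_independent_extend[of "{c}" "\<lambda>_. \<alpha>"] c by auto
  have hom: "0 \<le> r \<Longrightarrow> p (r *\<^sub>R y) = r * p y" for r y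
    using p by (simp add: sublinear_def)
  have "f x \<le> p x" if "x \<in> span {c}" for x
  proof -
    obtain t where x: "x = t *\<^sub>R c" using \<open>x \<in> span {c}\<close> by (auto simp: span_singleton)
    show ?thesis
    proof (cases "t \<ge> 0")
      case True
      have "t * \<alpha> \<le> t * p c" using \<open>\<alpha> \<le> p c\<close> True by (rule mult_left_mono)
      then show ?thesis using hom[OF True] by (simp add: x f linear_scale)
    next
      case False
      then have "- t * - \<alpha> \<le> - t * p (- c)"
        using \<open>- \<alpha> \<le> p (- c)\<close> by (intro mult_left_mono) auto
      moreover have "p x = - t * p (- c)"
        using hom[of "- t" "- c"] False by (simp add: x)
      ultimately show ?thesis by (simp add: x f linear_scale)
    qed
  qed
  then show ?thesis
    using hahn_banach[OF p subspace_span f(1)] f(2) by (metis span_base singletonI)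
qed

lemma norming_functional:
  fixes c :: 'a
  shows "\<exists>f. linear f \<and> (\<forall>x. f x \<le> norm x) \<and> f c = norm c"
proof (cases "c = 0")
  case True
  then show ?thesis by (intro exI[of _ "\<lambda>_. 0"]) (simp add: linear_zero)
next
  case False
  then show ?thesis by (intro exists_dominated_linear_functional sublinear_norm) auto
qed

end

section \<open>At least \<open>n + 1\<close> balls are needed\<close>

context finite_dimensional_normed_space
begin

lemma ball_subset_open_halfspace:
  fixes c :: 'a
  assumes "r \<le> norm c"
  shows "\<exists>f::'a \<Rightarrow> real. linear f \<and> (\<forall>z\<in>ball c r. 0 < f z)"
proof -
  obtain f where f: "linear f" "\<forall>x. f x \<le> norm x" "f c = norm c"
    using norming_functional by blast
  have "0 < f z" if "z \<in> ball c r" for z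
  proof -
    have "f z = f c - f (c - z)" using f(1) by (simp add: linear_diff)
    moreover have "f (c - z) < r" using f(2) that le_less_trans by (fastforce simp: dist_norm)
    ultimately show ?thesis using assms f(3) by linarith
  qed
  with f(1) show ?thesis by blast
qed

lemma dim_le_dim_Int_kernel:
  fixes f :: "'a \<Rightarrow> real"
  assumes W: "subspace W" and f: "linear f"
  shows "dim W \<le> dim (W \<inter> {x. f x = 0}) + 1"
proof (cases "\<forall>w\<in>W. f w = 0")
  case True
  then have "W \<inter> {x. f x = 0} = W" by auto
  then show ?thesis by simp
next
  case False
  then obtain w where w: "w \<in> W" "f w \<noteq> 0" by auto
  have "W \<subseteq> span (insert w (W \<inter> {x. f x = 0}))"
  proof
    fix y assume y: "y \<in> W"
    have "y - (f y / f w) *\<^sub>R w \<in> W \<inter> {x. f x = 0}"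
      using W y w by (simp add: subspace_diff subspace_scale linear_diff[OF f] linear_scale[OF f])
    then show "y \<in> span (insert w (W \<inter> {x. f x = 0}))"
      unfolding span_breakdown_eq by (blast intro: span_base)
  qed
  then have "dim W \<le> dim (insert w (W \<inter> {x. f x = 0}))" by (rule fd.dim_mono)
  also have "\<dots> \<le> dim (W \<inter> {x. f x = 0}) + 1" by (simp add: fd.dim_insert)
  finally show ?thesis .
qed

lemma dim_le_dim_common_kernel:
  fixes F :: "('a \<Rightarrow> real) set"
  assumes "finite F" "\<forall>f\<in>F. linear f"
  shows "dim (UNIV :: 'a set) \<le> dim {x. \<forall>f\<in>F. f x = 0} + card F"
  using assms
proof (induction F)
  case empty
  then show ?case by simp
next
  case (insert g F)
  let ?Z = "{x. \<forall>f\<in>F. f x = 0}"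
  have "subspace ?Z"
    using insert.prems unfolding subspace_def by (auto simp: linear_0 linear_add linear_scale)
  then have "dim ?Z \<le> dim (?Z \<inter> {x. g x = 0}) + 1"
    using insert.prems by (intro dim_le_dim_Int_kernel) auto
  moreover have "?Z \<inter> {x. g x = 0} = {x. \<forall>f\<in>insert g F. f x = 0}" by auto
  ultimately show ?case using insert by auto
qed

lemma exists_nonzero_common_zero:
  fixes F :: "('a \<Rightarrow> real) set"
  assumes "finite F" "\<forall>f\<in>F. linear f" "card F < dim (UNIV :: 'a set)"
  shows "\<exists>x. x \<noteq> 0 \<and> (\<forall>f\<in>F. f x = 0)"
proof -
  have "dim {x. \<forall>f\<in>F. f x = 0} \<noteq> 0"
    using dim_le_dim_common_kernel[OF assms(1,2)] assms(3) by linarith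
  then show ?thesis by (auto simp: fd.dim_eq_0)
qed

lemma exists_nonzero_nonpos:
  fixes F :: "('a \<Rightarrow> real) set"
  assumes F: "finite F" "F \<noteq> {}" "\<forall>f\<in>F. linear f" and card: "card F \<le> dim (UNIV :: 'a set)"
  shows "\<exists>y. y \<noteq> 0 \<and> (\<forall>f\<in>F. f y \<le> 0)"
proof -
  obtain g where g: "g \<in> F" using F(2) by blast
  have "0 < card F" using F(1) g card_gt_0_iff by blast
  then have "card (F - {g}) < dim (UNIV :: 'a set)"
    using card g F(1) by (simp add: card_Diff_singleton)
  then obtain x where x: "x \<noteq> 0" "\<forall>f\<in>F - {g}. f x = 0"
    using exists_nonzero_common_zero[of "F - {g}"] F by auto
  define y where "y = (if g x \<le> 0 then x else - x)"
  have "f y \<le> 0" if "f \<in> F" for f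
  proof (cases "f = g")
    case False
    then have "f x = 0" using x(2) that by blast
    then show ?thesis using F(3) that by (simp add: y_def linear_neg)
  qed (auto simp: y_def linear_neg F(3) g)
  moreover have "y \<noteq> 0" using x by (simp add: y_def)
  ultimately show ?thesis by blast
qed

lemma dim_less_card_ball_covering:
  assumes rays: "\<forall>x::'a. x \<noteq> 0 \<longrightarrow> (\<exists>r>0. r *\<^sub>R x \<in> A)"
    and cover: "ball_covering \<B> A" "finite \<B>" and nontrivial: "0 < dim (UNIV :: 'a set)"
  shows "dim (UNIV :: 'a set) < card \<B>"
proof (rule ccontr)
  assume "\<not> ?thesis"
  then have card: "card \<B> \<le> dim (UNIV :: 'a set)" by simp
  have "\<exists>f::'a \<Rightarrow> real. linear f \<and> (\<forall>z\<in>U. 0 < f z)" if "U \<in> \<B>" for U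
  proof -
    have "\<exists>c r. U = ball c r \<and> 0 < r \<and> r \<le> norm c"
      using cover(1) that by (simp add: ball_covering_def)
    then obtain c r where U: "U = ball c r" "r \<le> norm c" by auto
    show ?thesis unfolding U(1) by (rule ball_subset_open_halfspace[OF U(2)])
  qed
  then have "\<forall>U\<in>\<B>. \<exists>f::'a \<Rightarrow> real. linear f \<and> (\<forall>z\<in>U. 0 < f z)" by blast
  then obtain h :: "'a set \<Rightarrow> 'a \<Rightarrow> real"
    where h: "\<forall>U\<in>\<B>. linear (h U) \<and> (\<forall>z\<in>U. 0 < h U z)"
    by (rule bchoice[THEN exE])
  obtain v :: 'a where "v \<noteq> 0" using nontrivial fd.dim_eq_0[of UNIV] by auto
  then have "A \<noteq> {}" using rays by blast
  then have "\<B> \<noteq> {}" using cover(1) by (auto simp: ball_covering_def)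
  moreover have "card (h ` \<B>) \<le> dim (UNIV :: 'a set)"
    using card_image_le[OF cover(2), of h] card by linarith
  ultimately obtain y where y: "y \<noteq> 0" "\<forall>U\<in>\<B>. h U y \<le> 0"
    using exists_nonzero_nonpos[of "h ` \<B>"] cover(2) h by auto
  obtain r where r: "0 < r" "r *\<^sub>R y \<in> A" using rays y(1) by blast
  then obtain U where U: "U \<in> \<B>" "r *\<^sub>R y \<in> U" using cover(1) by (auto simp: ball_covering_def)
  then have "linear (h U)" "0 < h U (r *\<^sub>R y)" using h by auto
  then have "0 < r * h U y" by (simp add: linear_scale)
  moreover have "r * h U y \<le> 0" using y(2) U(1) r(1) by (simp add: mult_nonneg_nonpos)
  ultimately show False by simp
qed

end

section \<open>Covering with \<open>n + 1\<close> balls in smooth spaces\<close>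

lemma exists_positive_in_insert_neg_sum:
  fixes F :: "('a \<Rightarrow> real) set"
  assumes "finite F" "\<exists>f\<in>F. f z \<noteq> 0"
  shows "\<exists>g\<in>insert (\<lambda>x. - (\<Sum>f\<in>F. f x)) F. 0 < g z"
proof (rule ccontr)
  assume "\<not> ?thesis"
  then have nonpos: "\<forall>f\<in>F. f z \<le> 0" and "0 \<le> (\<Sum>f\<in>F. f z)" by auto
  moreover have "(\<Sum>f\<in>F. f z) \<le> 0" using nonpos by (simp add: sum_nonpos)
  ultimately have "(\<Sum>f\<in>F. - f z) = 0" by (simp add: sum_negf)
  then have "\<forall>f\<in>F. f z = 0"
    using sum_nonneg_eq_0_iff[OF assms(1), of "\<lambda>f. - f z"] nonpos by auto
  with assms(2) show False by blast
qed

lemma tangent_ball_mono: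
  fixes c :: "'a::real_normed_vector"
  assumes "norm c \<le> 1" "s \<le> t"
  shows "ball (s *\<^sub>R c) s \<subseteq> ball (t *\<^sub>R c) t"
proof
  fix z assume "z \<in> ball (s *\<^sub>R c) s"
  moreover have "dist (t *\<^sub>R c) (s *\<^sub>R c) \<le> t - s"
    using assms mult_left_mono[of "norm c" 1 "t - s"]
    by (simp add: dist_norm flip: scaleR_diff_left)
  ultimately show "z \<in> ball (t *\<^sub>R c) t"
    using dist_triangle[of "t *\<^sub>R c" z "s *\<^sub>R c"] by simp
qed

lemma compact_subset_mono_Union:
  fixes U :: "real \<Rightarrow> 'a::topological_space set"
  assumes "compact K" "\<And>t. open (U t)" "\<And>s t. s \<le> t \<Longrightarrow> U s \<subseteq> U t"
    and "K \<subseteq> (\<Union>t\<in>{0<..}. U t)"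
  shows "\<exists>T>0. K \<subseteq> U T"
proof -
  obtain C where C: "C \<subseteq> {0<..}" "finite C" "K \<subseteq> (\<Union>t\<in>C. U t)"
    using compactE_image[OF assms(1), of "{0<..}" U] assms(2,4) by metis
  define T where "T = Max (insert 1 C)"
  have "1 \<le> T" "\<forall>t\<in>C. t \<le> T" unfolding T_def using C(2) by (auto intro!: Max_ge)
  then have "0 < T" by simp
  then show ?thesis using C(3) assms(3) \<open>\<forall>t\<in>C. t \<le> T\<close> by blast
qed

context finite_dimensional_normed_space
begin

lemma exists_separating_functionals:
  fixes K :: "'a set"
  assumes "subspace K"
  shows "\<exists>F. finite F \<and> card F \<le> dim K \<and> (\<forall>f\<in>F. bounded_linear f)
    \<and> (\<forall>x\<in>K. x \<noteq> 0 \<longrightarrow> (\<exists>f\<in>F. f x \<noteq> (0::real)))"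
  using assms
proof (induction "dim K" arbitrary: K rule: less_induct)
  case less
  show ?case
  proof (cases "K \<subseteq> {0}")
    case True
    then show ?thesis by (intro exI[of _ "{}"]) auto
  next
    case False
    then obtain x where x: "x \<in> K" "x \<noteq> 0" by auto
    obtain f where f: "linear f" "\<forall>y. f y \<le> norm y" "f x = norm x"
      using norming_functional by blast
    let ?K' = "K \<inter> {y. f y = 0}"
    have K': "subspace ?K'"
      using less.prems linear_subspace_kernel[OF f(1)] by (rule subspace_inter)
    have "x \<notin> ?K'" using x f(3) by simp
    then have "?K' \<subset> K" using x(1) by blast
    then have "span ?K' \<subset> span K"
      using K' less.prems by (simp add: span_eq_iff[THEN iffD2])
    then have dim_less: "dim ?K' < dim K" by (rule fd.dim_psubset)
    obtain F :: "('a \<Rightarrow> real) set" where F: "finite F" "card F \<le> dim ?K'" "\<forall>g\<in>F. bounded_linear g"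
        "\<forall>y\<in>?K'. y \<noteq> 0 \<longrightarrow> (\<exists>g\<in>F. g y \<noteq> 0)"
      using less.hyps[OF dim_less K'] by (elim exE conjE) (rule that)
    have "card (insert f F) \<le> dim K"
      using F(1,2) dim_less by (simp add: card_insert_if)
    moreover have "\<forall>y\<in>K. y \<noteq> 0 \<longrightarrow> (\<exists>g\<in>insert f F. g y \<noteq> 0)"
      using F(4) by blast
    moreover have "bounded_linear f" using bounded_linear_if_le_norm[OF f(1)] f(2) by blast
    ultimately show ?thesis using F(1,3) by (intro exI[of _ "insert f F"]) auto
  qed
qed

lemma exists_positive_functionals:
  "\<exists>G::('a \<Rightarrow> real) set. finite G \<and> card G \<le> dim (UNIV :: 'a set) + 1
     \<and> (\<forall>g\<in>G. bounded_linear g \<and> (\<exists>y. 0 < g y))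
     \<and> (\<forall>z::'a. z \<noteq> 0 \<longrightarrow> (\<exists>g\<in>G. 0 < g z))"
proof -
  obtain F :: "('a \<Rightarrow> real) set" where F: "finite F" "card F \<le> dim (UNIV :: 'a set)"
      "\<forall>f\<in>F. bounded_linear f" "\<forall>x. x \<noteq> 0 \<longrightarrow> (\<exists>f\<in>F. f x \<noteq> 0)"
    using exists_separating_functionals[OF subspace_UNIV] by (elim exE conjE) (rule that, auto)
  define G where "G = {g \<in> insert (\<lambda>x. - (\<Sum>f\<in>F. f x)) F. \<exists>y. 0 < g y}"
  have "card G \<le> card (insert (\<lambda>x. - (\<Sum>f\<in>F. f x)) F)"
    using F(1) by (intro card_mono) (auto simp: G_def)
  also have "\<dots> \<le> dim (UNIV :: 'a set) + 1"
    using F(1,2) card_insert_le_m1 by (simp add: card_insert_if)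
  finally have "card G \<le> dim (UNIV :: 'a set) + 1" .
  moreover have "bounded_linear (\<lambda>x. - (\<Sum>f\<in>F. f x))"
    using F(3) by (intro bounded_linear_minus bounded_linear_sum) auto
  moreover have "\<exists>g\<in>G. 0 < g z" if "z \<noteq> 0" for z
    using exists_positive_in_insert_neg_sum[OF F(1)] F(4) that by (fastforce simp: G_def)
  ultimately show ?thesis using F by (intro exI[of _ G]) (auto simp: G_def)
qed

lemma exists_norming_point:
  fixes g :: "'a \<Rightarrow> real"
  assumes g: "bounded_linear g" and y: "0 < g y"
  shows "\<exists>c. norm c = 1 \<and> 0 < g c \<and> (\<forall>z. g z \<le> g c * norm z)"
proof -
  have "y \<noteq> 0" using y g by (auto simp: linear_simps)
  then have y1: "y /\<^sub>R norm y \<in> sphere 0 1" and "0 < g (y /\<^sub>R norm y)"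
    using g y by (simp_all add: linear_simps)
  have "sphere (0::'a) 1 = {x. norm x = 1}" by auto
  then have "compact (sphere (0::'a) 1)"
    by (intro compact_if_bounded_closed bounded_subset[OF bounded_cball sphere_cball])
      (auto intro!: closed_Collect_eq continuous_intros)
  then obtain c where c: "c \<in> sphere 0 1" "\<forall>z\<in>sphere 0 1. g z \<le> g c"
    using continuous_attains_sup[of "sphere 0 1" g] linear_continuous_on[OF g] y1 by blast
  have pos: "0 < g c" using c(2) y1 \<open>0 < g (y /\<^sub>R norm y)\<close> by fastforce
  have "g z \<le> g c * norm z" for z
  proof (cases "z = 0")
    case False
    then have "g (z /\<^sub>R norm z) \<le> g c" using c(2) by simp
    then show ?thesis using False g by (simp add: linear_simps field_simps)
  qed (use g in \<open>simp add: linear_simps\<close>)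
  with c(1) pos show ?thesis by auto
qed

lemma smooth_imp_mem_tangent_ball:
  fixes c x :: 'a and \<phi> :: "'a \<Rightarrow>\<^sub>L real"
  assumes smooth: "smooth_space TYPE('a)" and c: "norm c = 1"
    and \<phi>: "norm \<phi> = 1" "\<phi> c = 1" and x: "0 < \<phi> x"
  shows "\<exists>t>0. x \<in> ball (t *\<^sub>R c) t"
proof (rule ccontr)
  assume far: "\<not> ?thesis"
  define R where "R = (\<lambda>s. s *\<^sub>R x) ` {0..}"
  have "0 \<in> R" "x \<in> R"
    unfolding R_def by (rule image_eqI[of _ _ 0], simp, simp) (rule image_eqI[of _ _ 1], simp, simp)
  have "convex_cone R"
    unfolding convex_cone_iff R_def
    by (auto simp: image_iff scaleR_add_left[symmetric] intro!: exI[of _ "_ + _"])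
  have "1 \<le> norm (c - s *\<^sub>R x)" if "0 \<le> s" for s
  proof (cases "s = 0")
    case False
    with that have s: "0 < s" by simp
    then have "x \<notin> ball (inverse s *\<^sub>R c) (inverse s)"
      using far by (metis positive_imp_inverse_positive)
    then have "inverse s \<le> dist (inverse s *\<^sub>R c) x" by simp
    also have "dist (inverse s *\<^sub>R c) x = norm (inverse s *\<^sub>R (c - s *\<^sub>R x))"
      using s by (simp add: dist_norm scaleR_diff_right)
    also have "\<dots> = inverse s * norm (c - s *\<^sub>R x)" using s by simp
    finally show ?thesis using s by simp
  qed (simp add: c)
  then have "1 \<le> infdist c R"
    using \<open>0 \<in> R\<close> by (intro le_infdist) (auto simp: R_def dist_norm)
  moreover have "- 1 \<le> infdist (- c) R" by (rule order_trans[OF _ infdist_nonneg]) simp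
  ultimately obtain f where f: "linear f" "\<forall>y. f y \<le> infdist y R" "f c = 1"
    using exists_dominated_linear_functional[OF sublinear_infdist_convex_cone[OF \<open>convex_cone R\<close>]] c
    by force
  have f_le_norm: "f y \<le> norm y" for y
    using f(2)[rule_format, of y] infdist_le[OF \<open>0 \<in> R\<close>, of y] by (simp add: dist_norm)
  have "norm (Blinfun f) = 1 \<and> blinfun_apply (Blinfun f) c = norm c"
    using norm_Blinfun_eq_1[OF f(1) f_le_norm c f(3)] c f(3) by simp
  moreover have "norm \<phi> = 1 \<and> blinfun_apply \<phi> c = norm c" using \<phi> c by simp
  moreover have "c \<noteq> 0" using c by auto
  ultimately have "Blinfun f = \<phi>" using smooth unfolding smooth_space_def by blast
  moreover have "f x \<le> 0" using f(2) \<open>x \<in> R\<close> by (metis infdist_zero)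
  ultimately show False
    using x norm_Blinfun_eq_1(2)[OF f(1) f_le_norm c f(3)] by auto
qed

lemma halfspace_subset_tangent_balls:
  fixes g :: "'a \<Rightarrow> real"
  assumes smooth: "smooth_space TYPE('a)" and g: "bounded_linear g" and y: "0 < g y"
  shows "\<exists>c. norm c = 1 \<and> (\<forall>x. 0 < g x \<longrightarrow> (\<exists>t>0. x \<in> ball (t *\<^sub>R c) t))"
proof -
  obtain c where c: "norm c = 1" "0 < g c" "\<forall>z. g z \<le> g c * norm z"
    using exists_norming_point[OF g y] by blast
  define h where "h z = g z / g c" for z
  have "linear h"
    unfolding h_def[abs_def] using g by (intro linearI) (simp_all add: linear_simps add_divide_distrib)
  moreover have "h z \<le> norm z" for z
    using c(2,3) by (simp add: h_def divide_le_eq mult.commute)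
  moreover have "h c = 1" using c(2) by (simp add: h_def)
  ultimately have h: "linear h" "\<And>z. h z \<le> norm z" "h c = 1" by auto
  have "\<exists>t>0. x \<in> ball (t *\<^sub>R c) t" if "0 < g x" for x
    using smooth_imp_mem_tangent_ball[OF smooth c(1) norm_Blinfun_eq_1(1)[OF h(1,2) c(1) h(3)]]
      norm_Blinfun_eq_1(2)[OF h(1,2) c(1) h(3)] h(3) that c(2) by (simp add: h_def)
  with c(1) show ?thesis by blast
qed

lemma exists_ball_covering_card_le:
  fixes A :: "'a set"
  assumes smooth: "smooth_space TYPE('a)" and A: "bounded A" "0 \<notin> closure A"
  shows "\<exists>\<B>. ball_covering \<B> A \<and> finite \<B> \<and> card \<B> \<le> dim (UNIV :: 'a set) + 1"
proof -
  obtain G :: "('a \<Rightarrow> real) set" where G: "finite G" "card G \<le> dim (UNIV :: 'a set) + 1"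
      "\<forall>g\<in>G. bounded_linear g \<and> (\<exists>y. 0 < g y)"
      "\<forall>z. z \<noteq> 0 \<longrightarrow> (\<exists>g\<in>G. 0 < g z)"
    using exists_positive_functionals by (elim exE conjE) (rule that)
  have "\<forall>g\<in>G. \<exists>c. norm c = 1 \<and> (\<forall>x. 0 < g x \<longrightarrow> (\<exists>t>0. x \<in> ball (t *\<^sub>R c) t))"
    using halfspace_subset_tangent_balls[OF smooth] G(3) by blast
  then obtain c
    where c: "\<forall>g\<in>G. norm (c g) = 1 \<and> (\<forall>x. 0 < g x \<longrightarrow> (\<exists>t>0. x \<in> ball (t *\<^sub>R c g) t))"
    by (rule bchoice[THEN exE])
  define U where "U t = (\<Union>g\<in>G. ball (t *\<^sub>R c g) t)" for t
  have "compact (closure A)"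
    using A(1) by (intro compact_if_bounded_closed) (auto simp: bounded_closure)
  moreover have "U s \<subseteq> U t" if "s \<le> t" for s t
    unfolding U_def
  proof (intro UN_mono order_refl)
    fix g assume "g \<in> G"
    then show "ball (s *\<^sub>R c g) s \<subseteq> ball (t *\<^sub>R c g) t"
      using c that by (intro tangent_ball_mono) auto
  qed
  moreover have "closure A \<subseteq> (\<Union>t\<in>{0<..}. U t)"
  proof
    fix z assume "z \<in> closure A"
    then have "z \<noteq> 0" using A(2) by auto
    then obtain g where "g \<in> G" "0 < g z" using G(4) by blast
    then show "z \<in> (\<Union>t\<in>{0<..}. U t)" using c by (fastforce simp: U_def)
  qed
  ultimately obtain T where T: "0 < T" "closure A \<subseteq> U T"
    using compact_subset_mono_Union[of "closure A" U] by (auto simp: U_def)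
  define \<B> where "\<B> = (\<lambda>g. ball (T *\<^sub>R c g) T) ` G"
  have "ball_covering \<B> A"
    unfolding ball_covering_def \<B>_def
    using T closure_subset[of A] c by (auto simp: U_def intro!: exI[of _ T])
  moreover have "card \<B> \<le> dim (UNIV :: 'a set) + 1"
    using card_image_le[OF G(1)] G(2) unfolding \<B>_def by (meson order_trans)
  ultimately show ?thesis using G(1) by (auto simp: \<B>_def)
qed

end

lemma zero_notin_closure_if_dist0_pos:
  fixes A :: "'a::real_normed_vector set"
  assumes "0 < dist0 A"
  shows "0 \<notin> closure A"
proof
  assume "0 \<in> closure A"
  then obtain a where "a \<in> A" "dist a 0 < dist0 A"
    using assms by (auto simp: closure_approachable)
  moreover have "dist0 A \<le> norm a" if "a \<in> A" for a
    unfolding dist0_def using that by (intro cINF_lower bdd_belowI2[of _ 0]) auto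
  ultimately show False by fastforce
qed

theorem mainTheorem7:
  fixes A :: "'a::banach set" and n :: nat
  assumes dimX: "dim (UNIV :: 'a set) = n" and npos: "n \<ge> 1"
    and bdd: "bounded A" and nz: "0 \<notin> A"
    and rays: "\<forall>x::'a. x \<noteq> 0 \<longrightarrow> (\<exists>r>0. r *\<^sub>R x \<in> A)"
  shows "(\<forall>\<B>. ball_covering \<B> A \<longrightarrow> \<not> (finite \<B> \<and> card \<B> \<le> n))
     \<and> ((smooth_space TYPE('a) \<and> dist0 A > 0) \<longrightarrow>
          (\<exists>\<B>. ball_covering \<B> A \<and> finite \<B> \<and> card \<B> = n + 1))"
proof -
  obtain B :: "'a set"
    where B: "B \<subseteq> UNIV" "independent B" "UNIV \<subseteq> span B" "card B = dim (UNIV :: 'a set)"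
    by (rule basis_exists)
  then have "finite B" using dimX npos card_ge_0_finite by fastforce
  then interpret finite_dimensional_normed_space B
    using B by unfold_locales auto
  have lower: "n < card \<B>" if "ball_covering \<B> A" "finite \<B>" for \<B>
    using dim_less_card_ball_covering[OF rays that] dimX npos by simp
  have "\<exists>\<B>. ball_covering \<B> A \<and> finite \<B> \<and> card \<B> = n + 1"
    if smooth: "smooth_space TYPE('a)" and pos: "dist0 A > 0"
  proof -
    obtain \<B> where "ball_covering \<B> A" "finite \<B>" "card \<B> \<le> n + 1"
      using exists_ball_covering_card_le[OF smooth bdd zero_notin_closure_if_dist0_pos[OF pos]] dimX
      by blast
    with lower show ?thesis by (intro exI[of _ \<B>]) force
  qed
  with lower show ?thesis by force
qed

end
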